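(* For any types $T,R$ and any scalar $\alpha\in\mathcal S$: if $T\preceq R$ then $\alpha.T\preceq\alpha.R$.
   Context: Fix a commutative ring $(\mathcal S,+,\times)$. Types: $T ::= U \mid \forall X.T \mid \alpha.T \mid \overline0$; unit types: $U ::= X \mid U\to T \mid \forall X.U$. Type variables are only substituted by unit types, with $(\alpha.T)[U/X]=\alpha.T[U/X]$. Type equivalence $\equiv$ is the least congruence with $\alpha.\overline0\equiv\overline0$, $0.T\equiv\overline0$, $1.T\equiv T$, $\alpha.(\beta.T)\equiv(\alpha\times\beta).T$, $\forall X.\alpha.T\equiv\alpha.\forall X.T$. Write $T\prec R$ if either $R\equiv\forall X.T$ for some $X$, or $T\equiv\forall X.S$ and $R\equiv S[U/X]$ for some type $S$ and unit type $U$; $\preceq$ is the reflexive and transitive closure of $\prec$. *)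

theory Defs
  imports Main
begin

text \<open>Unit types and well-formed types are carved out by predicates
following the grammar  T ::= U | forall X.T | alpha.T | 0  and  U ::= X | U -> T | forall X.U.\<close>

datatype 's ty =
    TVar nat
  | Arr "'s ty" "'s ty"
  | All nat "'s ty"
  | Scal 's "'s ty"
  | Zero

fun is_unit :: "'s ty \<Rightarrow> bool" and wf_ty :: "'s ty \<Rightarrow> bool" where
  "is_unit (TVar X) = True"
| "is_unit (Arr U T) = (is_unit U \<and> wf_ty T)"
| "is_unit (All X U) = is_unit U"
| "is_unit (Scal a T) = False"
| "is_unit Zero = False"
| "wf_ty (TVar X) = True"
| "wf_ty (Arr U T) = (is_unit U \<and> wf_ty T)"
| "wf_ty (All X T) = wf_ty T"
| "wf_ty (Scal a T) = wf_ty T"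
| "wf_ty Zero = True"

fun vars :: "'s ty \<Rightarrow> nat set" where
  "vars (TVar X) = {X}"
| "vars (Arr U T) = vars U \<union> vars T"
| "vars (All X T) = insert X (vars T)"
| "vars (Scal a T) = vars T"
| "vars Zero = {}"

fun fvs :: "'s ty \<Rightarrow> nat set" where
  "fvs (TVar X) = {X}"
| "fvs (Arr U T) = fvs U \<union> fvs T"
| "fvs (All X T) = fvs T - {X}"
| "fvs (Scal a T) = fvs T"
| "fvs Zero = {}"

fun bvs :: "'s ty \<Rightarrow> nat set" where
  "bvs (TVar X) = {}"
| "bvs (Arr U T) = bvs U \<union> bvs T"
| "bvs (All X T) = insert X (bvs T)"
| "bvs (Scal a T) = bvs T"
| "bvs Zero = {}"

text \<open>Substitution of U for the free occurrences of X (not capture avoiding; it is only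
used under the side condition that no bound variable of the body is free in U).
Note (alpha.T)[U/X] = alpha.(T[U/X]).\<close>
fun subst :: "nat \<Rightarrow> 's ty \<Rightarrow> 's ty \<Rightarrow> 's ty" where
  "subst X U (TVar Y) = (if X = Y then U else TVar Y)"
| "subst X U (Arr A B) = Arr (subst X U A) (subst X U B)"
| "subst X U (All Y T) = (if X = Y then All Y T else All Y (subst X U T))"
| "subst X U (Scal a T) = Scal a (subst X U T)"
| "subst X U Zero = Zero"

text \<open>Type equivalence: least congruence on (well-formed) types containing the five
axioms, together with alpha-renaming of bound type variables (types are taken up to
alpha-conversion, as usual).\<close>
inductive teq :: "('s::comm_ring_1) ty \<Rightarrow> 's ty \<Rightarrow> bool" where
  refl: "wf_ty T \<Longrightarrow> teq T T"
| sym: "teq T R \<Longrightarrow> teq R T"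
| trans: "teq T R \<Longrightarrow> teq R S \<Longrightarrow> teq T S"
| alpha: "wf_ty T \<Longrightarrow> Y \<notin> vars T \<Longrightarrow> teq (All X T) (All Y (subst X (TVar Y) T))"
| scal_zero: "teq (Scal a Zero) Zero"
| zero_scal: "wf_ty T \<Longrightarrow> teq (Scal 0 T) Zero"
| one_scal: "wf_ty T \<Longrightarrow> teq (Scal 1 T) T"
| scal_scal: "wf_ty T \<Longrightarrow> teq (Scal a (Scal b T)) (Scal (a * b) T)"
| all_scal: "wf_ty T \<Longrightarrow> teq (All X (Scal a T)) (Scal a (All X T))"
| cong_arr: "teq U U' \<Longrightarrow> is_unit U \<Longrightarrow> is_unit U' \<Longrightarrow> teq T T' \<Longrightarrow>
              teq (Arr U T) (Arr U' T')"
| cong_all: "teq T T' \<Longrightarrow> teq (All X T) (All X T')"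
| cong_scal: "teq T T' \<Longrightarrow> teq (Scal a T) (Scal a T')"

text \<open>In the instantiation case, S ranges over all representatives with
T \<equiv> forall X.S; requiring the bound variables of S to avoid the free variables of U makes the
naive substitution capture-avoiding (such a representative always exists up to alpha).\<close>
definition prec :: "('s::comm_ring_1) ty \<Rightarrow> 's ty \<Rightarrow> bool" where
  "prec T R \<longleftrightarrow> wf_ty T \<and> wf_ty R \<and>
     ((\<exists>X. teq R (All X T)) \<or>
      (\<exists>X S U. wf_ty S \<and> is_unit U \<and> bvs S \<inter> fvs U = {} \<and>
               teq T (All X S) \<and> teq R (subst X U S)))"

definition preceq :: "('s::comm_ring_1) ty \<Rightarrow> 's ty \<Rightarrow> bool" where
  "preceq = prec\<^sup>*\<^sup>*"

end

theory Submission
  imports Defs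
begin

text \<open>Scaling commutes with both kinds of \<open>\<prec>\<close>-step: the axiom
  \<open>\<forall>X.\<alpha>.T \<equiv> \<alpha>.\<forall>X.T\<close> moves the scalar under the quantifier, and
  substitution passes through scalars, so \<open>\<alpha>.\<close> maps \<open>\<prec>\<close> into itself and
  hence \<open>\<preceq>\<close> into itself.\<close>

lemma rtranclp_map:
  assumes "\<And>x y. r x y \<Longrightarrow> r (f x) (f y)"
    and "r\<^sup>*\<^sup>* x y"
  shows "r\<^sup>*\<^sup>* (f x) (f y)"
  using assms(2) by induction (auto intro: rtranclp.rtrancl_into_rtrancl assms(1))

lemma teq_scal_all:
  assumes "teq T (All X S)" "wf_ty S"
  shows "teq (Scal a T) (All X (Scal a S))"
proof -
  have "teq (Scal a T) (Scal a (All X S))"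
    using assms(1) by (rule teq.cong_scal)
  moreover have "teq (Scal a (All X S)) (All X (Scal a S))"
    using assms(2) by (rule teq.sym[OF teq.all_scal])
  ultimately show ?thesis by (rule teq.trans)
qed

lemma prec_scal:
  assumes "prec T R"
  shows "prec (Scal a T) (Scal a R)"
proof -
  have wf: "wf_ty T" "wf_ty R" using assms by (auto simp: prec_def)
  from assms consider
      (gen) X where "teq R (All X T)"
    | (inst) X S U where "wf_ty S" "is_unit U" "bvs S \<inter> fvs U = {}"
        "teq T (All X S)" "teq R (subst X U S)"
    unfolding prec_def by blast
  then show ?thesis
  proof cases
    case (gen X)
    then have "teq (Scal a R) (All X (Scal a T))"
      using wf by (intro teq_scal_all)
    then show ?thesis using wf by (auto simp: prec_def)
  next
    case (inst X S U)
    have "teq (Scal a T) (All X (Scal a S))"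
      using inst by (intro teq_scal_all)
    moreover have "teq (Scal a R) (subst X U (Scal a S))"
      using inst by (simp add: teq.cong_scal)
    moreover have "wf_ty (Scal a S)" "bvs (Scal a S) \<inter> fvs U = {}"
      using inst by simp_all
    ultimately have "\<exists>X S' U'. wf_ty S' \<and> is_unit U' \<and> bvs S' \<inter> fvs U' = {} \<and>
        teq (Scal a T) (All X S') \<and> teq (Scal a R) (subst X U' S')"
      using inst(2) by blast
    then show ?thesis using wf unfolding prec_def by simp
  qed
qed

theorem mainTheorem19:
  fixes T R :: "('s::comm_ring_1) ty" and a :: 's
  assumes "wf_ty T" and "wf_ty R"
    and "preceq T R"
  shows "preceq (Scal a T) (Scal a R)"
  using assms(3) prec_scal rtranclp_map unfolding preceq_def by metis

end
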